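(* Let $T$ be a tournament whose strong components are $D_1,\ldots,D_k$, for some positive integer $k$, and let $\mathcal{X}\in\{g,P_3^*\}$. Then $$\overrightarrow{in}_{\mathcal{X}}(T)=\sum_{i=1}^k\overrightarrow{in}_{\mathcal{X}}(D_i)\quad\text{and}\quad \overrightarrow{hn}_{\mathcal{X}}(T)=\sum_{i=1}^k\overrightarrow{hn}_{\mathcal{X}}(D_i).$$ In particular, if $\ell\le k$ of the strong components are non-trivial (have more than one vertex), then $\overrightarrow{hn}_{P_3^*}(T)=\overrightarrow{hn}_{g}(T)=|\mathrm{Ext}(T)|+2\ell$.
   Context: A tournament is an orientation of a complete graph; its strong components are its maximal strongly connected subdigraphs (each $D_i$ is considered as the induced sub-tournament). For an oriented graph $D$: the geodetic interval function $I_g(u,v)$ is the set of vertices on some shortest directed $(u,v)$-path or some shortest directed $(v,u)$-path; the distance-two interval function $I_{P_3^*}(u,v)$ is $\{u,v\}$ together with all vertices $w$ with $(u,w),(w,v)\in A(D)$ and $(u,v)\notin A(D)$, or $(v,w),(w,u)\in A(D)$ and $(v,u)\notin A(D)$. For an interval function $I$ and $S\subseteq V(D)$, $I(S)=\bigcup_{u,v\in S}I(u,v)$; $C$ is convex if $I(C)=C$; the convex hull of $S$ is the smallest convex set containing $S$. An interval set is $S$ with $I(S)=V(D)$ and a hull set is $S$ with convex hull $V(D)$; $\overrightarrow{in}_{\mathcal{X}}(D)$ and $\overrightarrow{hn}_{\mathcal{X}}(D)$ are the minimum sizes of an interval set and of a hull set for $I_{\mathcal{X}}$. A vertex $v$ is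 transitive if whenever $(u,v),(v,w)\in A(D)$ we have $(u,w)\in A(D)$; $v$ is extreme if it is a source, a sink, or transitive; $\mathrm{Ext}(D)$ denotes the set of extreme vertices of $D$. *)

theory Defs
  imports Main
begin

text \<open>An oriented graph / digraph is given by a vertex set V and an arc set A
  (arcs outside V x V are ignored where relevant; for a tournament A \<subseteq> V x V).\<close>

definition tournament :: "'a set \<Rightarrow> ('a \<times> 'a) set \<Rightarrow> bool" where
  "tournament V A \<longleftrightarrow> finite V \<and> A \<subseteq> V \<times> V \<and> (\<forall>v. (v, v) \<notin> A) \<and>
     (\<forall>u\<in>V. \<forall>v\<in>V. u \<noteq> v \<longrightarrow> ((u, v) \<in> A \<longleftrightarrow> (v, u) \<notin> A))"

definition induced_arcs :: "('a \<times> 'a) set \<Rightarrow> 'a set \<Rightarrow> ('a \<times> 'a) set" where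
  "induced_arcs A S = A \<inter> (S \<times> S)"

definition strongly_connected :: "'a set \<Rightarrow> ('a \<times> 'a) set \<Rightarrow> bool" where
  "strongly_connected S A \<longleftrightarrow> S \<noteq> {} \<and>
     (\<forall>u\<in>S. \<forall>v\<in>S. (u, v) \<in> (induced_arcs A S)\<^sup>*)"

definition strong_components :: "'a set \<Rightarrow> ('a \<times> 'a) set \<Rightarrow> 'a set set" where
  "strong_components V A = {S. S \<subseteq> V \<and> strongly_connected S A \<and>
     (\<forall>S'. S \<subseteq> S' \<and> S' \<subseteq> V \<and> strongly_connected S' A \<longrightarrow> S' = S)}"

definition dpath :: "'a set \<Rightarrow> ('a \<times> 'a) set \<Rightarrow> 'a list \<Rightarrow> bool" where
  "dpath V A p \<longleftrightarrow> p \<noteq> [] \<and> set p \<subseteq> V \<and> distinct p \<and>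
     (\<forall>i. Suc i < length p \<longrightarrow> (p ! i, p ! Suc i) \<in> A)"

definition shortest_dpath :: "'a set \<Rightarrow> ('a \<times> 'a) set \<Rightarrow> 'a \<Rightarrow> 'a \<Rightarrow> 'a list \<Rightarrow> bool" where
  "shortest_dpath V A u v p \<longleftrightarrow> dpath V A p \<and> hd p = u \<and> last p = v \<and>
     (\<forall>q. dpath V A q \<and> hd q = u \<and> last q = v \<longrightarrow> length p \<le> length q)"

definition Ig :: "'a set \<Rightarrow> ('a \<times> 'a) set \<Rightarrow> 'a \<Rightarrow> 'a \<Rightarrow> 'a set" where
  "Ig V A u v = {w. \<exists>p. (shortest_dpath V A u v p \<or> shortest_dpath V A v u p) \<and> w \<in> set p}"

definition IP3 :: "'a set \<Rightarrow> ('a \<times> 'a) set \<Rightarrow> 'a \<Rightarrow> 'a \<Rightarrow> 'a set" where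
  "IP3 V A u v = {u, v} \<union>
     {w\<in>V. ((u, w) \<in> A \<and> (w, v) \<in> A \<and> (u, v) \<notin> A) \<or>
           ((v, w) \<in> A \<and> (w, u) \<in> A \<and> (v, u) \<notin> A)}"

type_synonym 'a intfun = "'a set \<Rightarrow> ('a \<times> 'a) set \<Rightarrow> 'a \<Rightarrow> 'a \<Rightarrow> 'a set"

definition Iset :: "'a intfun \<Rightarrow> 'a set \<Rightarrow> ('a \<times> 'a) set \<Rightarrow> 'a set \<Rightarrow> 'a set" where
  "Iset I V A S = (\<Union>u\<in>S. \<Union>v\<in>S. I V A u v)"

definition convex :: "'a intfun \<Rightarrow> 'a set \<Rightarrow> ('a \<times> 'a) set \<Rightarrow> 'a set \<Rightarrow> bool" where
  "convex I V A C \<longleftrightarrow> C \<subseteq> V \<and> Iset I V A C = C"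

definition convex_hull :: "'a intfun \<Rightarrow> 'a set \<Rightarrow> ('a \<times> 'a) set \<Rightarrow> 'a set \<Rightarrow> 'a set" where
  "convex_hull I V A S = \<Inter>{C. S \<subseteq> C \<and> convex I V A C}"

definition interval_set :: "'a intfun \<Rightarrow> 'a set \<Rightarrow> ('a \<times> 'a) set \<Rightarrow> 'a set \<Rightarrow> bool" where
  "interval_set I V A S \<longleftrightarrow> S \<subseteq> V \<and> Iset I V A S = V"

definition hull_set :: "'a intfun \<Rightarrow> 'a set \<Rightarrow> ('a \<times> 'a) set \<Rightarrow> 'a set \<Rightarrow> bool" where
  "hull_set I V A S \<longleftrightarrow> S \<subseteq> V \<and> convex_hull I V A S = V"

definition interval_number :: "'a intfun \<Rightarrow> 'a set \<Rightarrow> ('a \<times> 'a) set \<Rightarrow> nat" where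
  "interval_number I V A = (LEAST n. \<exists>S. interval_set I V A S \<and> card S = n)"

definition hull_number :: "'a intfun \<Rightarrow> 'a set \<Rightarrow> ('a \<times> 'a) set \<Rightarrow> nat" where
  "hull_number I V A = (LEAST n. \<exists>S. hull_set I V A S \<and> card S = n)"

definition is_source :: "'a set \<Rightarrow> ('a \<times> 'a) set \<Rightarrow> 'a \<Rightarrow> bool" where
  "is_source V A v \<longleftrightarrow> (\<forall>u\<in>V. (u, v) \<notin> A)"

definition is_sink :: "'a set \<Rightarrow> ('a \<times> 'a) set \<Rightarrow> 'a \<Rightarrow> bool" where
  "is_sink V A v \<longleftrightarrow> (\<forall>w\<in>V. (v, w) \<notin> A)"

definition is_transitive_vertex :: "'a set \<Rightarrow> ('a \<times> 'a) set \<Rightarrow> 'a \<Rightarrow> bool" where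
  "is_transitive_vertex V A v \<longleftrightarrow>
     (\<forall>u\<in>V. \<forall>w\<in>V. (u, v) \<in> A \<and> (v, w) \<in> A \<longrightarrow> (u, w) \<in> A)"

definition Ext :: "'a set \<Rightarrow> ('a \<times> 'a) set \<Rightarrow> 'a set" where
  "Ext V A = {v\<in>V. is_source V A v \<or> is_sink V A v \<or> is_transitive_vertex V A v}"

end

theory Submission
  imports Defs "HOL-Library.Disjoint_Sets"
begin

text \<open>
  Neither interval function sees across strong components: for u and v in different components
  there is an arc one way and no path back, so I(u, v) = {u, v}, while inside a component every
  relevant path stays in the component. Hence S is an interval (hull) set of T exactly when it
  meets every component in an interval (hull) set of that component, and the minimum sizes add up.

  A trivial component consists of an extreme vertex and has hull number 1. A non-trivial strong
  tournament has hull number 2. The P3*-hull H of an arc ab on a 3-cycle is strongly connected,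
  hence a module: every outside vertex dominates H or is dominated by it. If H is proper, strong
  connectivity gives y dominated by H and x dominating H with an arc y x; then a y x is a 3-cycle
  and the hull of the arc ay strictly contains H. So an arc on a 3-cycle with largest P3*-hull spans
  the tournament, and so does its geodetic hull, which contains the P3*-hull.
\<close>

section \<open>Interval functions and convex hulls\<close>

text \<open>Only \<open>u \<in> I u u\<close> is required of the endpoints: \<open>Ig V A u v\<close> is empty when neither
  vertex reaches the other.\<close>

definition well_formed_intfun :: "'a intfun \<Rightarrow> 'a set \<Rightarrow> ('a \<times> 'a) set \<Rightarrow> bool" where
  "well_formed_intfun I V A \<longleftrightarrow> (\<forall>u\<in>V. \<forall>v\<in>V. I V A u v \<subseteq> V) \<and> (\<forall>u\<in>V. u \<in> I V A u u)"

lemma Iset_subset: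
  "well_formed_intfun I V A \<Longrightarrow> S \<subseteq> V \<Longrightarrow> Iset I V A S \<subseteq> V"
  unfolding well_formed_intfun_def Iset_def by blast

lemma subset_Iset:
  "well_formed_intfun I V A \<Longrightarrow> S \<subseteq> V \<Longrightarrow> S \<subseteq> Iset I V A S"
  unfolding well_formed_intfun_def Iset_def by blast

lemma convex_vertices: "well_formed_intfun I V A \<Longrightarrow> convex I V A V"
  unfolding convex_def using Iset_subset[of I V A V] subset_Iset[of I V A V] by blast

lemma subset_convex_hull: "S \<subseteq> convex_hull I V A S"
  unfolding convex_hull_def by blast

lemma convex_hull_minimal: "convex I V A C \<Longrightarrow> S \<subseteq> C \<Longrightarrow> convex_hull I V A S \<subseteq> C"
  unfolding convex_hull_def by blast

lemma convex_hull_subset_vertices: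
  "well_formed_intfun I V A \<Longrightarrow> S \<subseteq> V \<Longrightarrow> convex_hull I V A S \<subseteq> V"
  by (metis convex_hull_minimal convex_vertices)

lemma convex_hull_closed:
  "u \<in> convex_hull I V A S \<Longrightarrow> v \<in> convex_hull I V A S \<Longrightarrow> I V A u v \<subseteq> convex_hull I V A S"
  unfolding convex_hull_def convex_def Iset_def by blast

lemma convex_convex_hull:
  assumes "well_formed_intfun I V A" "S \<subseteq> V"
  shows "convex I V A (convex_hull I V A S)"
proof -
  have "convex_hull I V A S \<subseteq> V"
    using convex_hull_subset_vertices[OF assms] .
  moreover have "Iset I V A (convex_hull I V A S) \<subseteq> convex_hull I V A S"
    unfolding Iset_def using convex_hull_closed[of _ I V A S] by (intro UN_least) auto
  ultimately show ?thesis
    unfolding convex_def using subset_Iset[OF assms(1)] by blast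
qed

lemma interval_set_vertices: "well_formed_intfun I V A \<Longrightarrow> interval_set I V A V"
  unfolding interval_set_def using convex_vertices unfolding convex_def by blast

lemma hull_set_vertices: "well_formed_intfun I V A \<Longrightarrow> hull_set I V A V"
  unfolding hull_set_def
  using convex_hull_subset_vertices[of I V A V] subset_convex_hull[of V I V A] by blast

lemma convex_hull_empty: "convex_hull I V A {} = {}"
  using convex_hull_minimal[of I V A "{}" "{}"] unfolding convex_def Iset_def by simp

lemma hull_number_singleton:
  assumes "well_formed_intfun I {v} A"
  shows "hull_number I {v} A = 1"
  unfolding hull_number_def
proof (rule Least_equality)
  show "\<exists>S. hull_set I {v} A S \<and> card S = 1"
    using hull_set_vertices[OF assms] by fastforce
next
  fix n assume "\<exists>S. hull_set I {v} A S \<and> card S = n"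
  then obtain S where "hull_set I {v} A S" "card S = n" by blast
  then have "S = {v}"
    unfolding hull_set_def using convex_hull_empty by (metis subset_singletonD)
  then show "1 \<le> n" using \<open>card S = n\<close> by simp
qed

lemma hull_number_eq_2:
  assumes wf: "well_formed_intfun I V A" and singleton: "\<forall>u\<in>V. I V A u u = {u}"
    and "finite V" "card V \<ge> 2" and hull: "hull_set I V A {a, b}"
  shows "hull_number I V A = 2"
proof -
  have "card S \<ge> 2" if S: "hull_set I V A S" for S
  proof (rule ccontr)
    assume small: "\<not> card S \<ge> 2"
    have "S \<subseteq> V" "finite S" "V \<noteq> {}"
      using S \<open>finite V\<close> \<open>card V \<ge> 2\<close> unfolding hull_set_def by (auto intro: finite_subset)
    obtain s where s: "s \<in> V" "S \<subseteq> {s}"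
    proof (cases "S = {}")
      case True
      then show ?thesis using \<open>V \<noteq> {}\<close> that by blast
    next
      case False
      then have "card S = 1" using small card_0_eq[OF \<open>finite S\<close>] by linarith
      then obtain s where "S = {s}" by (rule card_1_singletonE)
      then show ?thesis using that \<open>S \<subseteq> V\<close> by blast
    qed
    have "convex I V A {s}"
      unfolding convex_def Iset_def using s singleton by simp
    then have "V \<subseteq> {s}"
      using S s convex_hull_minimal unfolding hull_set_def by metis
    then show False
      using card_mono[of "{s}" V] \<open>card V \<ge> 2\<close> by simp
  qed
  moreover have "card {a, b} \<le> 2" by (simp add: card_insert_le_m1)
  ultimately show ?thesis
    unfolding hull_number_def using hull by (intro Least_equality) fastforce+
qed

section \<open>Additivity over separated partitions\<close>

definition min_card :: "('a set \<Rightarrow> bool) \<Rightarrow> nat" where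
  "min_card P = (LEAST n. \<exists>S. P S \<and> card S = n)"

lemma min_card_partition:
  assumes "finite V" and F: "partition_on V F"
    and P: "\<And>S. P S \<longleftrightarrow> S \<subseteq> V \<and> (\<forall>D\<in>F. Q D (S \<inter> D))"
    and Q_subset: "\<And>D X. D \<in> F \<Longrightarrow> Q D X \<Longrightarrow> X \<subseteq> D"
    and Q_part: "\<And>D. D \<in> F \<Longrightarrow> Q D D"
  shows "min_card P = (\<Sum>D\<in>F. min_card (Q D))"
proof -
  have "finite F" using finite_elements[OF \<open>finite V\<close> F] .
  have finite_parts: "finite D" if "D \<in> F" for D
    using Union_upper[OF that] partition_onD1[OF F] \<open>finite V\<close> finite_subset by metis
  have disjoint: "D \<inter> D' = {}" if "D \<in> F" "D' \<in> F" "D \<noteq> D'" for D D'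
    using that partition_onD2[OF F] unfolding disjoint_def disjnt_def by blast
  have card_split: "card S = (\<Sum>D\<in>F. card (S \<inter> D))" if "S \<subseteq> V" for S
  proof -
    have "S = (\<Union>D\<in>F. S \<inter> D)" using that partition_onD1[OF F] by blast
    also have "card \<dots> = (\<Sum>D\<in>F. card (S \<inter> D))"
      using \<open>finite F\<close> finite_parts disjoint by (subst card_UN_disjoint) auto
    finally show ?thesis .
  qed
  have "\<exists>X. Q D X \<and> card X = min_card (Q D)" if "D \<in> F" for D
    unfolding min_card_def by (rule LeastI_ex) (use Q_part[OF that] in blast)
  then obtain X where X: "\<And>D. D \<in> F \<Longrightarrow> Q D (X D)" "\<And>D. D \<in> F \<Longrightarrow> card (X D) = min_card (Q D)"
    by metis
  define S where "S = (\<Union>D\<in>F. X D)"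
  have S_Int: "S \<inter> D = X D" if "D \<in> F" for D
  proof -
    have "X D' \<inter> D = {}" if "D' \<in> F" "D' \<noteq> D" for D'
      using Q_subset[OF that(1) X(1)[OF that(1)]] disjoint[OF that(1) \<open>D \<in> F\<close> that(2)] by blast
    then show ?thesis using Q_subset[OF that X(1)[OF that]] that unfolding S_def by blast
  qed
  have "S \<subseteq> V" unfolding S_def using X(1) Q_subset partition_onD1[OF F] by blast
  then have "P S" using P S_Int X(1) by simp
  moreover have "card S = (\<Sum>D\<in>F. min_card (Q D))"
    using card_split[OF \<open>S \<subseteq> V\<close>] S_Int X(2) by simp
  moreover have "(\<Sum>D\<in>F. min_card (Q D)) \<le> card S'" if "P S'" for S'
  proof -
    have "min_card (Q D) \<le> card (S' \<inter> D)" if "D \<in> F" for D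
      unfolding min_card_def by (rule Least_le) (use P \<open>P S'\<close> that in blast)
    then show ?thesis using card_split P \<open>P S'\<close> by (simp add: sum_mono)
  qed
  ultimately show ?thesis
    unfolding min_card_def[of P] by (intro Least_equality) auto
qed

locale separated_partition =
  fixes I :: "'a intfun" and V :: "'a set" and A :: "('a \<times> 'a) set" and F :: "'a set set"
  assumes partition: "partition_on V F"
    and well_formed_parts: "D \<in> F \<Longrightarrow> well_formed_intfun I D (induced_arcs A D)"
    and local_parts: "D \<in> F \<Longrightarrow> u \<in> D \<Longrightarrow> v \<in> D \<Longrightarrow> I V A u v = I D (induced_arcs A D) u v"
    and separated_parts:
      "D \<in> F \<Longrightarrow> D' \<in> F \<Longrightarrow> D \<noteq> D' \<Longrightarrow> u \<in> D \<Longrightarrow> v \<in> D' \<Longrightarrow> I V A u v \<subseteq> {u, v}"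
begin

lemma part_subset: "D \<in> F \<Longrightarrow> D \<subseteq> V"
  using partition_onD1[OF partition] by blast

lemma ex_part_mem: "v \<in> V \<Longrightarrow> \<exists>D\<in>F. v \<in> D"
  using partition_onD1[OF partition] by blast

lemma parts_disjoint: "D \<in> F \<Longrightarrow> D' \<in> F \<Longrightarrow> D \<noteq> D' \<Longrightarrow> D \<inter> D' = {}"
  using partition_onD2[OF partition] unfolding disjoint_def disjnt_def by blast

lemma UN_parts_Int:
  assumes "\<And>D. D \<in> F \<Longrightarrow> X D \<subseteq> D" and "D \<in> F"
  shows "(\<Union>D'\<in>F. X D') \<inter> D = X D"
  using assms parts_disjoint by blast

lemma Iset_part_subset: "D \<in> F \<Longrightarrow> Iset I D (induced_arcs A D) (S \<inter> D) \<subseteq> D"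
  using Iset_subset[OF well_formed_parts] by blast

lemma Iset_partition:
  assumes "S \<subseteq> V"
  shows "Iset I V A S = (\<Union>D\<in>F. Iset I D (induced_arcs A D) (S \<inter> D))"
proof (intro equalityI subsetI)
  fix x assume "x \<in> Iset I V A S"
  then obtain u v where uv: "u \<in> S" "v \<in> S" and x: "x \<in> I V A u v"
    unfolding Iset_def by blast
  obtain D D' where D: "D \<in> F" "u \<in> D" and D': "D' \<in> F" "v \<in> D'"
    using ex_part_mem uv assms by blast
  have self: "w \<in> Iset I E (induced_arcs A E) (S \<inter> E)" if "E \<in> F" "w \<in> S" "w \<in> E" for w E
  proof -
    have "w \<in> I E (induced_arcs A E) w w"
      using well_formed_parts[OF that(1)] that(3) unfolding well_formed_intfun_def by blast
    then show ?thesis using that(2,3) unfolding Iset_def by blast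
  qed
  show "x \<in> (\<Union>D\<in>F. Iset I D (induced_arcs A D) (S \<inter> D))"
  proof (cases "D = D'")
    case True
    then have "x \<in> I D (induced_arcs A D) u v"
      using x local_parts[OF D] D'(2) by simp
    then have "x \<in> Iset I D (induced_arcs A D) (S \<inter> D)"
      using uv D(2) D'(2) True unfolding Iset_def by blast
    then show ?thesis using D(1) by blast
  next
    case False
    then have "x = u \<or> x = v" using separated_parts[OF D(1) D'(1) False D(2) D'(2)] x by blast
    then show ?thesis using self[OF D(1) uv(1) D(2)] self[OF D'(1) uv(2) D'(2)] D(1) D'(1) by blast
  qed
next
  fix x assume "x \<in> (\<Union>D\<in>F. Iset I D (induced_arcs A D) (S \<inter> D))"
  then obtain D u v where D: "D \<in> F" "u \<in> S \<inter> D" "v \<in> S \<inter> D"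
    and x: "x \<in> I D (induced_arcs A D) u v"
    unfolding Iset_def by blast
  then have "x \<in> I V A u v" using local_parts[OF D(1), of u v] by simp
  then show "x \<in> Iset I V A S" using D unfolding Iset_def by blast
qed

lemma Iset_Int_part:
  "S \<subseteq> V \<Longrightarrow> D \<in> F \<Longrightarrow> Iset I V A S \<inter> D = Iset I D (induced_arcs A D) (S \<inter> D)"
  unfolding Iset_partition by (rule UN_parts_Int) (rule Iset_part_subset)

lemma well_formed: "well_formed_intfun I V A"
  unfolding well_formed_intfun_def
proof (intro conjI ballI)
  fix u v assume "u \<in> V" "v \<in> V"
  then have "{u, v} \<subseteq> V" by blast
  have "I V A u v \<subseteq> Iset I V A {u, v}"
    unfolding Iset_def by blast
  also have "\<dots> \<subseteq> V"
    unfolding Iset_partition[OF \<open>{u, v} \<subseteq> V\<close>]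
    using Iset_part_subset part_subset by (intro UN_least) blast
  finally show "I V A u v \<subseteq> V" .
next
  fix u assume "u \<in> V"
  then obtain D where D: "D \<in> F" "u \<in> D" using ex_part_mem by blast
  then have "u \<in> I D (induced_arcs A D) u u"
    using well_formed_parts unfolding well_formed_intfun_def by blast
  then show "u \<in> I V A u u" using local_parts[OF D D(2)] by simp
qed

lemma eq_iff_Int_parts:
  assumes "X \<subseteq> V" "Y \<subseteq> V"
  shows "X = Y \<longleftrightarrow> (\<forall>D\<in>F. X \<inter> D = Y \<inter> D)"
proof (intro iffI equalityI subsetI)
  fix x assume parts: "\<forall>D\<in>F. X \<inter> D = Y \<inter> D"
  show "x \<in> Y" if "x \<in> X"
  proof -
    obtain D where "D \<in> F" "x \<in> D" using ex_part_mem \<open>x \<in> X\<close> assms(1) by blast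
    then show ?thesis using parts \<open>x \<in> X\<close> by blast
  qed
  show "x \<in> X" if "x \<in> Y"
  proof -
    obtain D where "D \<in> F" "x \<in> D" using ex_part_mem \<open>x \<in> Y\<close> assms(2) by blast
    then show ?thesis using parts \<open>x \<in> Y\<close> by blast
  qed
qed simp

lemma interval_set_iff:
  "interval_set I V A S \<longleftrightarrow> S \<subseteq> V \<and> (\<forall>D\<in>F. interval_set I D (induced_arcs A D) (S \<inter> D))"
proof (cases "S \<subseteq> V")
  case True
  have "Iset I V A S = V \<longleftrightarrow> (\<forall>D\<in>F. Iset I V A S \<inter> D = V \<inter> D)"
    using eq_iff_Int_parts Iset_subset[OF well_formed True] by blast
  also have "\<dots> \<longleftrightarrow> (\<forall>D\<in>F. Iset I D (induced_arcs A D) (S \<inter> D) = D)"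
    using Iset_Int_part[OF True] part_subset by (simp add: Int_absorb1)
  finally show ?thesis
    unfolding interval_set_def using True by blast
qed (simp add: interval_set_def)

lemma convex_iff:
  assumes "C \<subseteq> V"
  shows "convex I V A C \<longleftrightarrow> (\<forall>D\<in>F. convex I D (induced_arcs A D) (C \<inter> D))"
proof -
  have "Iset I V A C = C \<longleftrightarrow> (\<forall>D\<in>F. Iset I V A C \<inter> D = C \<inter> D)"
    using eq_iff_Int_parts Iset_subset[OF well_formed assms] assms by blast
  then show ?thesis
    unfolding convex_def using assms Iset_Int_part by simp
qed

lemma convex_hull_part_subset: "D \<in> F \<Longrightarrow> convex_hull I D (induced_arcs A D) (S \<inter> D) \<subseteq> D"
  using convex_hull_subset_vertices[OF well_formed_parts] by blast

lemma convex_hull_partition: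
  assumes "S \<subseteq> V"
  shows "convex_hull I V A S = (\<Union>D\<in>F. convex_hull I D (induced_arcs A D) (S \<inter> D))"
    (is "?H = ?H'")
proof
  have H'V: "?H' \<subseteq> V" using convex_hull_part_subset part_subset by blast
  have "convex I V A ?H'"
  proof (subst convex_iff[OF H'V], intro ballI)
    fix D assume "D \<in> F"
    then have "convex I D (induced_arcs A D) (convex_hull I D (induced_arcs A D) (S \<inter> D))"
      using convex_convex_hull[OF well_formed_parts] by blast
    then show "convex I D (induced_arcs A D) (?H' \<inter> D)"
      using UN_parts_Int[of "\<lambda>E. convex_hull I E (induced_arcs A E) (S \<inter> E)",
          OF convex_hull_part_subset \<open>D \<in> F\<close>] by simp
  qed
  moreover have "S \<subseteq> ?H'"
  proof
    fix x assume "x \<in> S"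
    then obtain D where "D \<in> F" "x \<in> D" using ex_part_mem assms by blast
    then show "x \<in> ?H'" using \<open>x \<in> S\<close> subset_convex_hull[of "S \<inter> D"] by blast
  qed
  ultimately show "?H \<subseteq> ?H'" by (rule convex_hull_minimal)
next
  have HV: "?H \<subseteq> V" and "convex I V A ?H"
    using convex_hull_subset_vertices[OF well_formed assms] convex_convex_hull[OF well_formed assms]
    by auto
  show "?H' \<subseteq> ?H"
  proof (intro UN_least)
    fix D assume "D \<in> F"
    then have "convex I D (induced_arcs A D) (?H \<inter> D)"
      using convex_iff[OF HV] \<open>convex I V A ?H\<close> by blast
    moreover have "S \<inter> D \<subseteq> ?H \<inter> D" using subset_convex_hull[of S I V A] by blast
    ultimately have "convex_hull I D (induced_arcs A D) (S \<inter> D) \<subseteq> ?H \<inter> D"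
      by (rule convex_hull_minimal)
    then show "convex_hull I D (induced_arcs A D) (S \<inter> D) \<subseteq> ?H" by blast
  qed
qed

lemma hull_set_iff:
  "hull_set I V A S \<longleftrightarrow> S \<subseteq> V \<and> (\<forall>D\<in>F. hull_set I D (induced_arcs A D) (S \<inter> D))"
proof (cases "S \<subseteq> V")
  case True
  have Int_part: "convex_hull I V A S \<inter> D = convex_hull I D (induced_arcs A D) (S \<inter> D)"
    if "D \<in> F" for D
    unfolding convex_hull_partition[OF True] using UN_parts_Int[of "\<lambda>E. convex_hull I E (induced_arcs A E) (S \<inter> E)", OF convex_hull_part_subset that] .
  have "convex_hull I V A S = V \<longleftrightarrow> (\<forall>D\<in>F. convex_hull I V A S \<inter> D = V \<inter> D)"
    using eq_iff_Int_parts convex_hull_subset_vertices[OF well_formed True] by blast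
  also have "\<dots> \<longleftrightarrow> (\<forall>D\<in>F. convex_hull I D (induced_arcs A D) (S \<inter> D) = D)"
    using Int_part part_subset by (simp add: Int_absorb1)
  finally show ?thesis
    unfolding hull_set_def using True by blast
qed (simp add: hull_set_def)

lemma interval_number_sum:
  assumes "finite V"
  shows "interval_number I V A = (\<Sum>D\<in>F. interval_number I D (induced_arcs A D))"
  unfolding interval_number_def min_card_def[symmetric]
proof (rule min_card_partition[OF assms partition interval_set_iff])
  show "X \<subseteq> D" if "interval_set I D (induced_arcs A D) X" for D X
    using that unfolding interval_set_def by blast
  show "interval_set I D (induced_arcs A D) D" if "D \<in> F" for D
    using interval_set_vertices[OF well_formed_parts[OF that]] .
qed

lemma hull_number_sum:
  assumes "finite V"
  shows "hull_number I V A = (\<Sum>D\<in>F. hull_number I D (induced_arcs A D))"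
  unfolding hull_number_def min_card_def[symmetric]
proof (rule min_card_partition[OF assms partition hull_set_iff])
  show "X \<subseteq> D" if "hull_set I D (induced_arcs A D) X" for D X
    using that unfolding hull_set_def by blast
  show "hull_set I D (induced_arcs A D) D" if "D \<in> F" for D
    using hull_set_vertices[OF well_formed_parts[OF that]] .
qed

end

section \<open>Strong components and shortest paths\<close>

lemma rtrancl_exit:
  assumes "(a, b) \<in> R\<^sup>*" "a \<in> P" "b \<notin> P"
  obtains p q where "p \<in> P" "q \<notin> P" "(p, q) \<in> R"
  using assms by (induction rule: rtrancl_induct) blast+

lemma rtrancl_in_vertices: "(v, x) \<in> A\<^sup>* \<Longrightarrow> A \<subseteq> V \<times> V \<Longrightarrow> v \<in> V \<Longrightarrow> x \<in> V"
  by (induction rule: rtrancl_induct) auto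

lemma rtrancl_induced_arcs_mono: "(x, y) \<in> (induced_arcs A S)\<^sup>* \<Longrightarrow> (x, y) \<in> A\<^sup>*"
  unfolding induced_arcs_def by (metis Int_lower1 rtrancl_mono subsetD)

lemma induced_arcs_idem: "induced_arcs (induced_arcs A D) D = induced_arcs A D"
  unfolding induced_arcs_def by blast

definition scc :: "('a \<times> 'a) set \<Rightarrow> 'a \<Rightarrow> 'a set" where
  "scc A v = {x. (v, x) \<in> A\<^sup>* \<and> (x, v) \<in> A\<^sup>*}"

lemma scc_self: "v \<in> scc A v"
  unfolding scc_def by simp

lemma scc_eq: "x \<in> scc A v \<Longrightarrow> scc A x = scc A v"
  unfolding scc_def by (auto intro: rtrancl_trans)

lemma scc_subset: "A \<subseteq> V \<times> V \<Longrightarrow> v \<in> V \<Longrightarrow> scc A v \<subseteq> V"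
  unfolding scc_def using rtrancl_in_vertices[of v _ A V] by blast

lemma scc_closed_between:
  "(u, w) \<in> A\<^sup>* \<Longrightarrow> (w, v) \<in> A\<^sup>* \<Longrightarrow> u \<in> scc A c \<Longrightarrow> v \<in> scc A c \<Longrightarrow> w \<in> scc A c"
  unfolding scc_def using rtrancl_trans[of c u A w] rtrancl_trans[of w v A c] by blast

lemma rtrancl_scc_induced:
  assumes "(x, y) \<in> A\<^sup>*" "x \<in> scc A v" "y \<in> scc A v"
  shows "(x, y) \<in> (induced_arcs A (scc A v))\<^sup>*"
  using assms(1,3)
proof (induction rule: rtrancl_induct)
  case (step y z)
  then have "y \<in> scc A v" using scc_closed_between[of x y A z v] assms(2) by blast
  then have "(y, z) \<in> induced_arcs A (scc A v)"
    using step unfolding induced_arcs_def by blast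
  then show ?case using step.IH[OF \<open>y \<in> scc A v\<close>] by simp
qed simp

lemma strongly_connected_scc: "strongly_connected (scc A v) A"
  unfolding strongly_connected_def
proof (intro conjI ballI)
  show "scc A v \<noteq> {}" using scc_self[of v A] by blast
  fix x y assume x: "x \<in> scc A v" and y: "y \<in> scc A v"
  then have "(x, v) \<in> A\<^sup>*" "(v, y) \<in> A\<^sup>*" unfolding scc_def by auto
  then show "(x, y) \<in> (induced_arcs A (scc A v))\<^sup>*"
    using rtrancl_scc_induced[OF rtrancl_trans x y] by blast
qed

lemma strongly_connected_scc_induced:
  "strongly_connected (scc A v) (induced_arcs A (scc A v))"
  using strongly_connected_scc[of A v] unfolding strongly_connected_def induced_arcs_idem .

lemma strongly_connected_subset_scc: "strongly_connected S A \<Longrightarrow> v \<in> S \<Longrightarrow> S \<subseteq> scc A v"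
  unfolding strongly_connected_def scc_def using rtrancl_induced_arcs_mono by fast

lemma strong_components_eq_scc:
  assumes "A \<subseteq> V \<times> V"
  shows "strong_components V A = scc A ` V"
proof (intro equalityI subsetI)
  fix S assume "S \<in> strong_components V A"
  then have S: "strongly_connected S A" "S \<subseteq> V"
    and maximal: "\<And>S'. S \<subseteq> S' \<Longrightarrow> S' \<subseteq> V \<Longrightarrow> strongly_connected S' A \<Longrightarrow> S' = S"
    unfolding strong_components_def by auto
  obtain v where "v \<in> S" using S(1) unfolding strongly_connected_def by blast
  then have "v \<in> V" using S(2) by blast
  have "scc A v = S"
    using maximal[OF strongly_connected_subset_scc[OF S(1) \<open>v \<in> S\<close>]
        scc_subset[OF assms \<open>v \<in> V\<close>] strongly_connected_scc] .
  then show "S \<in> scc A ` V" using \<open>v \<in> V\<close> by blast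
next
  fix S assume "S \<in> scc A ` V"
  then obtain v where v: "v \<in> V" "S = scc A v" by blast
  have "S' = S" if "S \<subseteq> S'" "strongly_connected S' A" for S'
  proof -
    have "v \<in> S'" using that(1) v(2) scc_self[of v A] by blast
    then show ?thesis using strongly_connected_subset_scc[OF that(2)] that(1) v(2) by blast
  qed
  then show "S \<in> strong_components V A"
    unfolding strong_components_def using scc_subset[OF assms v(1)] strongly_connected_scc[of A v] v(2)
    by blast
qed

lemma partition_on_scc:
  assumes "A \<subseteq> V \<times> V"
  shows "partition_on V (scc A ` V)"
proof (rule partition_onI)
  have "v \<in> \<Union>(scc A ` V)" if "v \<in> V" for v
    using that scc_self[of v A] by blast
  then show "\<Union>(scc A ` V) = V" using scc_subset[OF assms] by blast
  show "disjnt D D'" if D: "D \<in> scc A ` V" "D' \<in> scc A ` V" and "D \<noteq> D'" for D D'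
  proof -
    obtain u u' where u: "D = scc A u" "D' = scc A u'" using D by blast
    have False if "x \<in> D" "x \<in> D'" for x
      using scc_eq[of x A u] scc_eq[of x A u'] u that \<open>D \<noteq> D'\<close> by simp
    then show ?thesis unfolding disjnt_def by blast
  qed
  show "{} \<notin> scc A ` V" using scc_self[of _ A] by (metis empty_iff imageE)
qed

lemma dpath_reach:
  assumes "dpath V A p" "x \<in> set p"
  shows "(hd p, x) \<in> A\<^sup>*" "(x, last p) \<in> A\<^sup>*"
proof -
  have step: "(p ! i, p ! j) \<in> A\<^sup>*" if "i \<le> j" "j < length p" for i j
    using that
  proof (induction j)
    case (Suc j)
    then show ?case
      using assms(1) unfolding dpath_def by (metis Suc_lessD le_Suc_eq rtrancl.simps)
  qed simp
  obtain i where i: "i < length p" "x = p ! i" using assms(2) by (metis in_set_conv_nth)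
  have "p \<noteq> []" using assms(1) unfolding dpath_def by blast
  then show "(hd p, x) \<in> A\<^sup>*" "(x, last p) \<in> A\<^sup>*"
    using step i by (simp_all add: hd_conv_nth last_conv_nth)
qed

lemma dpath_short:
  assumes "dpath V A p" "length p \<le> 2"
  shows "set p = {hd p, last p} \<and> (hd p = last p \<or> (hd p, last p) \<in> A)"
proof -
  have "p \<noteq> []" using assms(1) unfolding dpath_def by blast
  then consider a where "p = [a]" | a b where "p = [a, b]"
    using assms(2) by (cases p rule: remdups_adj.cases) auto
  then show ?thesis
  proof cases
    case (2 a b)
    then have "(p ! 0, p ! Suc 0) \<in> A" using assms(1) unfolding dpath_def by simp
    then show ?thesis using 2 by auto
  qed auto
qed

lemma dpath_two: "(a, b) \<in> A \<Longrightarrow> a \<noteq> b \<Longrightarrow> a \<in> V \<Longrightarrow> b \<in> V \<Longrightarrow> dpath V A [a, b]"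
  unfolding dpath_def by (simp add: less_Suc_eq)

lemma dpath_three:
  "(a, w) \<in> A \<Longrightarrow> (w, b) \<in> A \<Longrightarrow> distinct [a, w, b] \<Longrightarrow> {a, w, b} \<subseteq> V \<Longrightarrow> dpath V A [a, w, b]"
  unfolding dpath_def by (simp add: less_Suc_eq nth_Cons split: nat.splits)

lemma dpath_induced_scc:
  assumes "scc A c \<subseteq> V" "hd p \<in> scc A c" "last p \<in> scc A c"
  shows "dpath V A p \<longleftrightarrow> dpath (scc A c) (induced_arcs A (scc A c)) p"
proof
  assume p: "dpath V A p"
  have "set p \<subseteq> scc A c"
  proof
    fix x assume "x \<in> set p"
    show "x \<in> scc A c"
      using scc_closed_between[OF dpath_reach[OF p \<open>x \<in> set p\<close>] assms(2,3)] .
  qed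
  then show "dpath (scc A c) (induced_arcs A (scc A c)) p"
    using p unfolding dpath_def induced_arcs_def by (auto dest: nth_mem)
qed (use assms(1) in \<open>auto simp: dpath_def induced_arcs_def\<close>)

lemma Ig_scc:
  assumes "scc A c \<subseteq> V" "u \<in> scc A c" "v \<in> scc A c"
  shows "Ig V A u v = Ig (scc A c) (induced_arcs A (scc A c)) u v"
proof -
  have "shortest_dpath V A x y p \<longleftrightarrow> shortest_dpath (scc A c) (induced_arcs A (scc A c)) x y p"
    if "x \<in> scc A c" "y \<in> scc A c" for x y p
    unfolding shortest_dpath_def using dpath_induced_scc[OF assms(1)] that by metis
  then show ?thesis unfolding Ig_def using assms(2,3) by simp
qed

lemma IP3_scc:
  assumes "scc A c \<subseteq> V" "u \<in> scc A c" "v \<in> scc A c"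
  shows "IP3 V A u v = IP3 (scc A c) (induced_arcs A (scc A c)) u v"
proof -
  have between: "w \<in> scc A c" if "(a, w) \<in> A" "(w, b) \<in> A" "a \<in> scc A c" "b \<in> scc A c" for a b w
    using scc_closed_between[OF r_into_rtrancl r_into_rtrancl, OF that] .
  show ?thesis
  proof (rule set_eqI)
    fix w
    show "w \<in> IP3 V A u v \<longleftrightarrow> w \<in> IP3 (scc A c) (induced_arcs A (scc A c)) u v"
      unfolding IP3_def induced_arcs_def using between[of u w v] between[of v w u] assms by blast
  qed
qed

lemma Ig_arc_no_return:
  assumes "A \<subseteq> V \<times> V" "(u, v) \<in> A" "(v, u) \<notin> A\<^sup>*"
  shows "Ig V A u v \<subseteq> {u, v}"
proof -
  have "u \<noteq> v" using assms(3) by auto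
  then have uv: "dpath V A [u, v]" using assms(1,2) by (intro dpath_two) auto
  have "set p \<subseteq> {u, v}" if "shortest_dpath V A u v p" for p
  proof -
    have "dpath V A p" "hd p = u" "last p = v" "length p \<le> length [u, v]"
      using that uv unfolding shortest_dpath_def by auto
    then show ?thesis using dpath_short[of V A p] by auto
  qed
  moreover have "\<not> shortest_dpath V A v u p" for p
  proof
    assume "shortest_dpath V A v u p"
    then have "dpath V A p" "hd p = v" "last p = u"
      unfolding shortest_dpath_def by auto
    moreover have "last p \<in> set p" using \<open>dpath V A p\<close> unfolding dpath_def by simp
    ultimately show False using assms(3) dpath_reach(1) by metis
  qed
  ultimately show ?thesis unfolding Ig_def by blast
qed

lemma IP3_arc_no_return:
  assumes "(u, v) \<in> A" "(v, u) \<notin> A\<^sup>*"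
  shows "IP3 V A u v = {u, v}"
proof -
  have "\<not> ((v, w) \<in> A \<and> (w, u) \<in> A)" for w
    using assms(2) by (meson converse_rtrancl_into_rtrancl r_into_rtrancl)
  then show ?thesis unfolding IP3_def using assms(1) by blast
qed

lemma Ig_self:
  assumes "u \<in> V"
  shows "Ig V A u u = {u}"
proof -
  have u: "dpath V A [u]" using assms unfolding dpath_def by simp
  have only: "p = [u]" if "shortest_dpath V A u u p" for p
  proof -
    have "length p \<le> length [u]" "dpath V A p" "hd p = u"
      using that u unfolding shortest_dpath_def by auto
    then show ?thesis unfolding dpath_def by (cases p) auto
  qed
  have single: "shortest_dpath V A u u [u]"
    using u unfolding shortest_dpath_def dpath_def by (auto simp: Suc_leI)
  show ?thesis unfolding Ig_def using single by (auto dest: only)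
qed

lemma IP3_self: "(\<And>w. (u, w) \<in> A \<Longrightarrow> (w, u) \<notin> A) \<Longrightarrow> IP3 V A u u = {u}"
  unfolding IP3_def by blast

lemma well_formed_Ig: "well_formed_intfun Ig V A"
  unfolding well_formed_intfun_def
proof (intro conjI ballI)
  show "Ig V A u v \<subseteq> V" for u v
    unfolding Ig_def shortest_dpath_def dpath_def by blast
  show "u \<in> Ig V A u u" if "u \<in> V" for u
    using Ig_self[OF that] by blast
qed

lemma well_formed_IP3: "well_formed_intfun IP3 V A"
  unfolding well_formed_intfun_def IP3_def by blast

lemma Ig_midpoint:
  assumes "A \<subseteq> V \<times> V" and asym: "\<And>x y. (x, y) \<in> A \<Longrightarrow> (y, x) \<notin> A"
    and "(a, w) \<in> A" "(w, b) \<in> A" "(a, b) \<notin> A"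
  shows "w \<in> Ig V A a b"
proof -
  have "a \<noteq> w" "w \<noteq> b" "a \<noteq> b" using assms(3,4) asym by blast+
  then have "distinct [a, w, b]" by simp
  then have awb: "dpath V A [a, w, b]" using assms(1,3,4) by (intro dpath_three) auto
  have "\<forall>q. dpath V A q \<and> hd q = a \<and> last q = b \<longrightarrow> length [a, w, b] \<le> length q"
  proof (intro allI impI)
    fix q assume q: "dpath V A q \<and> hd q = a \<and> last q = b"
    show "length [a, w, b] \<le> length q"
    proof (rule ccontr)
      assume "\<not> length [a, w, b] \<le> length q"
      then show False
        using dpath_short[of V A q] q \<open>distinct [a, w, b]\<close> assms(5) by auto
    qed
  qed
  then have "shortest_dpath V A a b [a, w, b]"
    unfolding shortest_dpath_def using awb by simp
  then show ?thesis unfolding Ig_def by force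
qed

lemma convex_Ig_imp_convex_IP3:
  assumes "A \<subseteq> V \<times> V" "\<And>x y. (x, y) \<in> A \<Longrightarrow> (y, x) \<notin> A" and C: "convex Ig V A C"
  shows "convex IP3 V A C"
proof -
  have "C \<subseteq> V" using C unfolding convex_def by blast
  have "IP3 V A u v \<subseteq> C" if "u \<in> C" "v \<in> C" for u v
  proof -
    have "IP3 V A u v \<subseteq> {u, v} \<union> Ig V A u v \<union> Ig V A v u"
      unfolding IP3_def using Ig_midpoint[OF assms(1,2)] by blast
    also have "\<dots> \<subseteq> C" using C that unfolding convex_def Iset_def by blast
    finally show ?thesis .
  qed
  then have "Iset IP3 V A C \<subseteq> C" unfolding Iset_def by blast
  then show ?thesis
    unfolding convex_def using subset_Iset[OF well_formed_IP3 \<open>C \<subseteq> V\<close>] \<open>C \<subseteq> V\<close> by blast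
qed

section \<open>Strong components of a tournament\<close>

lemma tournament_arcs_subset: "tournament V A \<Longrightarrow> A \<subseteq> V \<times> V"
  unfolding tournament_def by blast

lemma tournament_asym: "tournament V A \<Longrightarrow> (u, v) \<in> A \<Longrightarrow> (v, u) \<notin> A"
  unfolding tournament_def by (metis SigmaD1 SigmaD2 subsetD)

lemma tournament_total:
  "tournament V A \<Longrightarrow> u \<in> V \<Longrightarrow> v \<in> V \<Longrightarrow> u \<noteq> v \<Longrightarrow> (v, u) \<notin> A \<Longrightarrow> (u, v) \<in> A"
  unfolding tournament_def by blast

lemma tournament_induced:
  assumes "tournament V A" "D \<subseteq> V"
  shows "tournament D (induced_arcs A D)"
proof -
  have "finite D" using assms finite_subset unfolding tournament_def by blast
  moreover have "\<forall>u\<in>D. \<forall>v\<in>D. u \<noteq> v \<longrightarrow> ((u, v) \<in> A \<longleftrightarrow> (v, u) \<notin> A)" "\<forall>v. (v, v) \<notin> A"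
    using assms unfolding tournament_def by blast+
  ultimately show ?thesis unfolding tournament_def induced_arcs_def by blast
qed

lemma strongly_connected_rtrancl:
  "strongly_connected S A \<Longrightarrow> u \<in> S \<Longrightarrow> v \<in> S \<Longrightarrow> (u, v) \<in> A\<^sup>*"
  unfolding strongly_connected_def using rtrancl_induced_arcs_mono by metis

lemma Ig_commute: "Ig V A u v = Ig V A v u"
  unfolding Ig_def by blast

lemma IP3_commute: "IP3 V A u v = IP3 V A v u"
  unfolding IP3_def by blast

lemma tournament_interval_between_scc:
  assumes T: "tournament V A" and "u \<in> V" "v \<in> V" "v \<notin> scc A u"
  shows "Ig V A u v \<subseteq> {u, v}" "IP3 V A u v \<subseteq> {u, v}"
proof -
  have "u \<noteq> v" using assms(4) scc_self by metis
  then consider "(u, v) \<in> A" | "(v, u) \<in> A"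
    using tournament_total[OF T] assms(2,3) by blast
  then have "Ig V A u v \<subseteq> {u, v} \<and> IP3 V A u v \<subseteq> {u, v}"
  proof cases
    case 1
    then have "(v, u) \<notin> A\<^sup>*" using assms(4) unfolding scc_def by auto
    then show ?thesis
      using Ig_arc_no_return[OF tournament_arcs_subset[OF T] 1] IP3_arc_no_return[OF 1] by simp
  next
    case 2
    then have "(u, v) \<notin> A\<^sup>*" using assms(4) unfolding scc_def by auto
    then show ?thesis
      using Ig_arc_no_return[OF tournament_arcs_subset[OF T] 2] IP3_arc_no_return[OF 2]
      by (simp add: Ig_commute IP3_commute insert_commute)
  qed
  then show "Ig V A u v \<subseteq> {u, v}" "IP3 V A u v \<subseteq> {u, v}" by auto
qed

lemma separated_partition_scc:
  assumes T: "tournament V A" and J: "J = Ig \<or> J = IP3"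
  shows "separated_partition J V A (scc A ` V)"
proof
  have arcs: "A \<subseteq> V \<times> V" using tournament_arcs_subset[OF T] .
  show "partition_on V (scc A ` V)" using partition_on_scc[OF arcs] .
  show "well_formed_intfun J D (induced_arcs A D)" for D
    using J well_formed_Ig well_formed_IP3 by metis
  show "J V A u v = J D (induced_arcs A D) u v"
    if D: "D \<in> scc A ` V" and uv: "u \<in> D" "v \<in> D" for D u v
  proof -
    obtain c where "c \<in> V" "D = scc A c" using D by blast
    then show ?thesis
      using J Ig_scc[OF scc_subset[OF arcs]] IP3_scc[OF scc_subset[OF arcs]] uv by metis
  qed
  show "J V A u v \<subseteq> {u, v}"
    if D: "D \<in> scc A ` V" "D' \<in> scc A ` V" "D \<noteq> D'" and uv: "u \<in> D" "v \<in> D'" for D D' u v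
  proof -
    obtain c c' where c: "c \<in> V" "D = scc A c" and c': "c' \<in> V" "D' = scc A c'"
      using D(1,2) by blast
    then have "D = scc A u" "D' = scc A v" using scc_eq uv by metis+
    then have "v \<notin> scc A u" using D(3) scc_eq[of v A u] by auto
    moreover have "u \<in> V" "v \<in> V" using uv c c' scc_subset[OF arcs] by blast+
    ultimately show ?thesis using J tournament_interval_between_scc[OF T] by metis
  qed
qed

section \<open>Strong tournaments have hull number two\<close>

lemma tournament_cycle_triangle:
  assumes T: "tournament V A" and "(v, v) \<in> A\<^sup>+"
  obtains p q where "(v, p) \<in> A" "(p, q) \<in> A" "(q, v) \<in> A"
proof -
  obtain x where "(v, x) \<in> A" "(x, v) \<in> A\<^sup>*"
    using tranclD[OF assms(2)] by blast
  define Out where "Out = {w. (v, w) \<in> A}"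
  have "x \<in> Out" "v \<notin> Out"
    unfolding Out_def using \<open>(v, x) \<in> A\<close> tournament_asym[OF T] by blast+
  then obtain p q where "p \<in> Out" "q \<notin> Out" and pq: "(p, q) \<in> A"
    using rtrancl_exit[OF \<open>(x, v) \<in> A\<^sup>*\<close>] by blast
  then have p: "(v, p) \<in> A" and q: "(v, q) \<notin> A" unfolding Out_def by auto
  have "q \<noteq> v" using tournament_asym[OF T pq] p by blast
  moreover have "q \<in> V" "v \<in> V" using pq p tournament_arcs_subset[OF T] by blast+
  ultimately have "(q, v) \<in> A" using tournament_total[OF T] q by blast
  then show ?thesis using that p pq by blast
qed

lemma triangle_strongly_connected:
  assumes ab: "(a, b) \<in> A" and bc: "(b, c) \<in> A" and ca: "(c, a) \<in> A"
  shows "strongly_connected {a, b, c} A"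
proof -
  let ?E = "induced_arcs A {a, b, c}"
  have E: "(a, b) \<in> ?E" "(b, c) \<in> ?E" "(c, a) \<in> ?E"
    using assms unfolding induced_arcs_def by auto
  have to_a: "(x, a) \<in> ?E\<^sup>*" if "x \<in> {a, b, c}" for x
  proof -
    have "(b, a) \<in> ?E\<^sup>*" using E(2,3) by (meson converse_rtrancl_into_rtrancl r_into_rtrancl)
    then show ?thesis using that E(3) by auto
  qed
  have from_a: "(a, x) \<in> ?E\<^sup>*" if "x \<in> {a, b, c}" for x
  proof -
    have "(a, c) \<in> ?E\<^sup>*" using E(1,2) by (meson converse_rtrancl_into_rtrancl r_into_rtrancl)
    then show ?thesis using that E(1) by auto
  qed
  show ?thesis
    unfolding strongly_connected_def using to_a from_a by (meson insert_not_empty rtrancl_trans)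
qed

lemma strongly_connected_IP3_hull:
  assumes "S \<subseteq> V" "S \<subseteq> R" "R \<subseteq> convex_hull IP3 V A S" and R: "strongly_connected R A"
  shows "strongly_connected (convex_hull IP3 V A S) A"
proof -
  let ?H = "convex_hull IP3 V A S"
  let ?E = "induced_arcs A ?H"
  have HV: "?H \<subseteq> V" using convex_hull_subset_vertices[OF well_formed_IP3 assms(1)] .
  obtain r where "r \<in> R" using R unfolding strongly_connected_def by blast
  define K where "K = {x \<in> ?H. (r, x) \<in> ?E\<^sup>* \<and> (x, r) \<in> ?E\<^sup>*}"
  have "R \<subseteq> K"
  proof
    fix x assume "x \<in> R"
    have "induced_arcs A R \<subseteq> ?E" using assms(3) unfolding induced_arcs_def by blast
    then have "(r, x) \<in> ?E\<^sup>*" "(x, r) \<in> ?E\<^sup>*"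
      using R \<open>r \<in> R\<close> \<open>x \<in> R\<close> rtrancl_mono unfolding strongly_connected_def by blast+
    then show "x \<in> K" unfolding K_def using assms(3) \<open>x \<in> R\<close> by blast
  qed
  have "Iset IP3 V A K \<subseteq> K"
  proof
    fix x assume "x \<in> Iset IP3 V A K"
    then obtain y z where yz: "y \<in> K" "z \<in> K" and x: "x \<in> IP3 V A y z"
      unfolding Iset_def by blast
    then have "x \<in> ?H" using convex_hull_closed[of y IP3 V A S z] unfolding K_def by blast
    have between: "x \<in> K" if "(y', x) \<in> A" "(x, z') \<in> A" "y' \<in> K" "z' \<in> K" for y' z'
    proof -
      have "(y', x) \<in> ?E" "(x, z') \<in> ?E"
        using that \<open>x \<in> ?H\<close> unfolding K_def induced_arcs_def by auto
      moreover have "(r, y') \<in> ?E\<^sup>*" "(z', r) \<in> ?E\<^sup>*" using that(3,4) unfolding K_def by auto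
      ultimately have "(r, x) \<in> ?E\<^sup>*" "(x, r) \<in> ?E\<^sup>*"
        by (meson rtrancl.rtrancl_into_rtrancl converse_rtrancl_into_rtrancl)+
      then show ?thesis unfolding K_def using \<open>x \<in> ?H\<close> by blast
    qed
    from x consider "x = y" | "x = z" | "(y, x) \<in> A" "(x, z) \<in> A" | "(z, x) \<in> A" "(x, y) \<in> A"
      unfolding IP3_def by blast
    then show "x \<in> K" using yz between by cases auto
  qed
  moreover have "K \<subseteq> V" using HV unfolding K_def by blast
  ultimately have "convex IP3 V A K"
    unfolding convex_def using subset_Iset[OF well_formed_IP3] by blast
  then have "?H \<subseteq> K" using convex_hull_minimal \<open>R \<subseteq> K\<close> assms(2) by blast
  then show ?thesis
    unfolding strongly_connected_def K_def using \<open>r \<in> R\<close> assms(3) by (blast intro: rtrancl_trans)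
qed

lemma IP3_convex_module:
  assumes T: "tournament V A" and C: "convex IP3 V A C" "strongly_connected C A"
    and x: "x \<in> V" "x \<notin> C"
  shows "(\<forall>h\<in>C. (x, h) \<in> A) \<or> (\<forall>h\<in>C. (h, x) \<in> A)"
proof (rule ccontr)
  assume "\<not> ?thesis"
  then obtain h1 h2 where h: "h1 \<in> C" "h2 \<in> C" "(x, h1) \<notin> A" "(h2, x) \<notin> A" by blast
  have CV: "C \<subseteq> V" using C(1) unfolding convex_def by blast
  define P where "P = {h. (x, h) \<in> A}"
  have "(h2, h1) \<in> (induced_arcs A C)\<^sup>*"
    using C(2) h(1,2) unfolding strongly_connected_def by blast
  moreover have "h2 \<in> P" using tournament_total[OF T x(1)] h x CV unfolding P_def by blast
  moreover have "h1 \<notin> P" using h(3) unfolding P_def by blast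
  ultimately obtain p q where "p \<in> P" "q \<notin> P" and pq: "(p, q) \<in> induced_arcs A C"
    by (rule rtrancl_exit)
  then have "(x, p) \<in> A" "(x, q) \<notin> A" "p \<in> C" "q \<in> C" "(p, q) \<in> A"
    unfolding P_def induced_arcs_def by auto
  then have "(q, x) \<in> A" using tournament_total[OF T] x CV by blast
  then have "x \<in> IP3 V A q p"
    unfolding IP3_def using \<open>(x, p) \<in> A\<close> tournament_asym[OF T \<open>(p, q) \<in> A\<close>] x(1) by blast
  then have "x \<in> Iset IP3 V A C" unfolding Iset_def using \<open>p \<in> C\<close> \<open>q \<in> C\<close> by blast
  then show False using C(1) x(2) unfolding convex_def by blast
qed

lemma IP3_convex_escape:
  assumes T: "tournament V A" and "strongly_connected V A"
    and C: "convex IP3 V A C" "strongly_connected C A" "C \<noteq> V"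
  obtains x y where "x \<notin> C" "y \<notin> C" "\<forall>h\<in>C. (h, y) \<in> A" "(y, x) \<in> A" "\<forall>h\<in>C. (x, h) \<in> A"
proof -
  have CV: "C \<subseteq> V" using C(1) unfolding convex_def by blast
  obtain a where "a \<in> C" using C(2) unfolding strongly_connected_def by blast
  obtain z where "z \<in> V" "z \<notin> C" using CV C(3) by blast
  have reach: "(u, v) \<in> A\<^sup>*" if "u \<in> V" "v \<in> V" for u v
    using strongly_connected_rtrancl[OF assms(2) that] .
  obtain p y0 where "p \<in> C" "y0 \<notin> C" "(p, y0) \<in> A"
    using rtrancl_exit[OF reach] \<open>a \<in> C\<close> \<open>z \<in> V\<close> \<open>z \<notin> C\<close> CV by blast
  then have "y0 \<in> V" using tournament_arcs_subset[OF T] by blast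
  have "\<not> (\<forall>h\<in>C. (y0, h) \<in> A)" using tournament_asym[OF T \<open>(p, y0) \<in> A\<close>] \<open>p \<in> C\<close> by blast
  then have "\<forall>h\<in>C. (h, y0) \<in> A" using IP3_convex_module[OF T C(1,2) \<open>y0 \<in> V\<close> \<open>y0 \<notin> C\<close>] by blast
  define Out where "Out = {y \<in> V. y \<notin> C \<and> (\<forall>h\<in>C. (h, y) \<in> A)}"
  have "y0 \<in> Out" "a \<notin> Out"
    unfolding Out_def using \<open>y0 \<in> V\<close> \<open>y0 \<notin> C\<close> \<open>\<forall>h\<in>C. (h, y0) \<in> A\<close> \<open>a \<in> C\<close> by auto
  then obtain y x where "y \<in> Out" "x \<notin> Out" and yx: "(y, x) \<in> A"
    using rtrancl_exit[OF reach] \<open>y0 \<in> V\<close> \<open>a \<in> C\<close> CV by blast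
  then have y: "y \<notin> C" "\<forall>h\<in>C. (h, y) \<in> A" and "x \<in> V"
    unfolding Out_def using tournament_arcs_subset[OF T] by auto
  have "x \<notin> C" using y(2) tournament_asym[OF T yx] by blast
  then have "\<not> (\<forall>h\<in>C. (h, x) \<in> A)" using \<open>x \<notin> Out\<close> \<open>x \<in> V\<close> unfolding Out_def by blast
  then have "\<forall>h\<in>C. (x, h) \<in> A" using IP3_convex_module[OF T C(1,2) \<open>x \<in> V\<close> \<open>x \<notin> C\<close>] by blast
  then show ?thesis using that \<open>x \<notin> C\<close> y yx by blast
qed

lemma IP3_hull_extends:
  assumes T: "tournament V A" and "C \<subseteq> V" "a \<in> C" "y \<notin> C"
    and y: "\<forall>h\<in>C. (h, y) \<in> A" and yx: "(y, x) \<in> A" and x: "\<forall>h\<in>C. (x, h) \<in> A"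
  shows "C \<subset> convex_hull IP3 V A {a, y}"
proof -
  let ?H = "convex_hull IP3 V A {a, y}"
  have ay: "a \<in> ?H" "y \<in> ?H" using subset_convex_hull[of "{a, y}" IP3 V A] by blast+
  have "x \<in> V" "(a, y) \<in> A" "(x, a) \<in> A"
    using yx y x \<open>a \<in> C\<close> tournament_arcs_subset[OF T] by blast+
  then have "x \<in> IP3 V A a y"
    unfolding IP3_def using yx tournament_asym[OF T \<open>(a, y) \<in> A\<close>] by blast
  then have "x \<in> ?H" using convex_hull_closed[OF ay] by blast
  have "h \<in> IP3 V A x y" if "h \<in> C" for h
    unfolding IP3_def using that x y \<open>C \<subseteq> V\<close> tournament_asym[OF T yx] by blast
  then have "C \<subseteq> ?H" using convex_hull_closed[OF \<open>x \<in> ?H\<close> ay(2)] by blast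
  then show ?thesis using ay(2) \<open>y \<notin> C\<close> by blast
qed

lemma strong_tournament_has_triangle:
  assumes T: "tournament V A" and "strongly_connected V A" "card V \<ge> 2"
  obtains a b c where "(a, b) \<in> A" "(b, c) \<in> A" "(c, a) \<in> A"
proof -
  have "finite V" using T unfolding tournament_def by blast
  moreover have "\<not> card V \<le> Suc 0" using assms(3) by simp
  ultimately obtain v x where "v \<in> V" "x \<in> V" "v \<noteq> x"
    using card_le_Suc0_iff_eq by blast
  then have "(v, x) \<in> A\<^sup>*" "(x, v) \<in> A\<^sup>*"
    using strongly_connected_rtrancl[OF assms(2)] by blast+
  then have "(v, x) \<in> A\<^sup>+" using \<open>v \<noteq> x\<close> by (simp add: rtrancl_eq_or_trancl)
  then have "(v, v) \<in> A\<^sup>+" using \<open>(x, v) \<in> A\<^sup>*\<close> by (rule trancl_rtrancl_trancl)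
  then show ?thesis using tournament_cycle_triangle[OF T] that by metis
qed

lemma IP3_hull_triangle_strongly_connected:
  assumes T: "tournament V A" and abc: "(a, b) \<in> A" "(b, c) \<in> A" "(c, a) \<in> A"
  shows "strongly_connected (convex_hull IP3 V A {a, b}) A"
proof -
  let ?H = "convex_hull IP3 V A {a, b}"
  have "{a, b} \<subseteq> V" using abc tournament_arcs_subset[OF T] by blast
  have ab: "a \<in> ?H" "b \<in> ?H" using subset_convex_hull[of "{a, b}" IP3 V A] by blast+
  have "c \<in> V" using abc tournament_arcs_subset[OF T] by blast
  then have "c \<in> IP3 V A a b"
    unfolding IP3_def using abc(2,3) tournament_asym[OF T abc(1)] by blast
  then have "{a, b, c} \<subseteq> ?H" using ab convex_hull_closed[OF ab] by blast
  then show ?thesis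
    using strongly_connected_IP3_hull[OF \<open>{a, b} \<subseteq> V\<close> _ _ triangle_strongly_connected[OF abc]]
    by blast
qed

lemma IP3_hull_triangle_grows:
  assumes T: "tournament V A" and "strongly_connected V A"
    and abc: "(a, b) \<in> A" "(b, c) \<in> A" "(c, a) \<in> A"
    and "convex_hull IP3 V A {a, b} \<noteq> V"
  obtains y x where "(a, y) \<in> A" "(y, x) \<in> A" "(x, a) \<in> A"
    "convex_hull IP3 V A {a, b} \<subset> convex_hull IP3 V A {a, y}"
proof -
  let ?H = "convex_hull IP3 V A {a, b}"
  have "{a, b} \<subseteq> V" using abc tournament_arcs_subset[OF T] by blast
  have "a \<in> ?H" using subset_convex_hull[of "{a, b}" IP3 V A] by blast
  have "convex IP3 V A ?H" using convex_convex_hull[OF well_formed_IP3 \<open>{a, b} \<subseteq> V\<close>] .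
  then obtain x y where "x \<notin> ?H" "y \<notin> ?H" and y: "\<forall>h\<in>?H. (h, y) \<in> A"
    and yx: "(y, x) \<in> A" and x: "\<forall>h\<in>?H. (x, h) \<in> A"
    using IP3_convex_escape[OF T assms(2) _ IP3_hull_triangle_strongly_connected[OF T abc] assms(6)]
    by blast
  have "?H \<subseteq> V" using convex_hull_subset_vertices[OF well_formed_IP3 \<open>{a, b} \<subseteq> V\<close>] .
  then have "?H \<subset> convex_hull IP3 V A {a, y}"
    using IP3_hull_extends[OF T _ \<open>a \<in> ?H\<close> \<open>y \<notin> ?H\<close> y yx x] by blast
  moreover have "(a, y) \<in> A" "(x, a) \<in> A" using y x \<open>a \<in> ?H\<close> by blast+
  ultimately show ?thesis using that yx by blast
qed

lemma strong_tournament_IP3_hull_pair: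
  assumes T: "tournament V A" and "strongly_connected V A" "card V \<ge> 2"
  obtains a b where "(a, b) \<in> A" "convex_hull IP3 V A {a, b} = V"
proof -
  have "finite V" using T unfolding tournament_def by blast
  have hull_finite: "finite (convex_hull IP3 V A {a, b})" if "(a, b) \<in> A" for a b
  proof -
    have "{a, b} \<subseteq> V" using that tournament_arcs_subset[OF T] by blast
    then show ?thesis
      using convex_hull_subset_vertices[OF well_formed_IP3] \<open>finite V\<close> finite_subset by metis
  qed
  define hull_size where "hull_size = (\<lambda>(a, b). card (convex_hull IP3 V A {a, b}))"
  define on_triangle where "on_triangle = (\<lambda>(a, b). \<exists>c. (a, b) \<in> A \<and> (b, c) \<in> A \<and> (c, a) \<in> A)"
  obtain a0 b0 c0 where "(a0, b0) \<in> A" "(b0, c0) \<in> A" "(c0, a0) \<in> A"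
    using strong_tournament_has_triangle[OF assms] .
  then have "on_triangle (a0, b0)" unfolding on_triangle_def by blast
  moreover have "\<forall>e. on_triangle e \<longrightarrow> hull_size e < Suc (card V)"
  proof (intro allI impI)
    fix e assume "on_triangle e"
    then obtain a b where "e = (a, b)" "(a, b) \<in> A" unfolding on_triangle_def by (cases e) auto
    then have "{a, b} \<subseteq> V" using tournament_arcs_subset[OF T] by blast
    then have "card (convex_hull IP3 V A {a, b}) \<le> card V"
      using card_mono[OF \<open>finite V\<close> convex_hull_subset_vertices[OF well_formed_IP3]] by blast
    then show "hull_size e < Suc (card V)" unfolding hull_size_def \<open>e = (a, b)\<close> by simp
  qed
  ultimately obtain e where "on_triangle e" and max: "\<forall>e'. on_triangle e' \<longrightarrow> hull_size e' \<le> hull_size e"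
    using Lattices_Big.ex_has_greatest_nat[of on_triangle "(a0, b0)" hull_size] by blast
  then obtain a b c where "e = (a, b)" and abc: "(a, b) \<in> A" "(b, c) \<in> A" "(c, a) \<in> A"
    unfolding on_triangle_def by (cases e) auto
  have "convex_hull IP3 V A {a, b} = V"
  proof (rule ccontr)
    assume "convex_hull IP3 V A {a, b} \<noteq> V"
    then obtain y x where ayx: "(a, y) \<in> A" "(y, x) \<in> A" "(x, a) \<in> A"
      and grows: "convex_hull IP3 V A {a, b} \<subset> convex_hull IP3 V A {a, y}"
      using IP3_hull_triangle_grows[OF T assms(2) abc] by blast
    have "hull_size (a, b) < hull_size (a, y)"
      unfolding hull_size_def using psubset_card_mono[OF hull_finite[OF ayx(1)] grows] by simp
    moreover have "on_triangle (a, y)" unfolding on_triangle_def using ayx by blast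
    ultimately show False using max \<open>e = (a, b)\<close> by fastforce
  qed
  then show ?thesis using that abc(1) by blast
qed

lemma strong_tournament_hull_number:
  assumes T: "tournament V A" and "strongly_connected V A" "card V \<ge> 2" and J: "J = Ig \<or> J = IP3"
  shows "hull_number J V A = 2"
proof -
  have arcs: "A \<subseteq> V \<times> V" and "finite V" using T unfolding tournament_def by blast+
  obtain a b where "(a, b) \<in> A" and hull: "convex_hull IP3 V A {a, b} = V"
    using strong_tournament_IP3_hull_pair[OF assms(1-3)] .
  then have ab: "{a, b} \<subseteq> V" using arcs by blast
  have "convex IP3 V A (convex_hull Ig V A {a, b})"
    using convex_Ig_imp_convex_IP3[OF arcs tournament_asym[OF T] convex_convex_hull[OF well_formed_Ig ab]] .
  then have "V \<subseteq> convex_hull Ig V A {a, b}"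
    using hull convex_hull_minimal[OF _ subset_convex_hull] by metis
  then have "hull_set Ig V A {a, b}" "hull_set IP3 V A {a, b}"
    unfolding hull_set_def using hull ab convex_hull_subset_vertices[OF well_formed_Ig ab] by auto
  moreover have "\<forall>u\<in>V. Ig V A u u = {u}" by (simp add: Ig_self)
  moreover have "\<forall>u\<in>V. IP3 V A u u = {u}" using IP3_self[OF tournament_asym[OF T]] by blast
  ultimately have "hull_number Ig V A = 2" "hull_number IP3 V A = 2"
    using hull_number_eq_2[OF well_formed_Ig _ \<open>finite V\<close> assms(3)]
      hull_number_eq_2[OF well_formed_IP3 _ \<open>finite V\<close> assms(3)] by blast+
  then show ?thesis using J by blast
qed

section \<open>Extreme vertices\<close>

lemma Ext_tournament:
  assumes T: "tournament V A"
  shows "Ext V A = {v \<in> V. (v, v) \<notin> A\<^sup>+}"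
proof (intro equalityI subsetI)
  fix v assume "v \<in> Ext V A"
  then have "v \<in> V" unfolding Ext_def by blast
  have False if cycle: "(v, v) \<in> A\<^sup>+"
  proof -
    obtain p q where vp: "(v, p) \<in> A" and pq: "(p, q) \<in> A" and qv: "(q, v) \<in> A"
      using tournament_cycle_triangle[OF T cycle] .
    then have "p \<in> V" "q \<in> V" using tournament_arcs_subset[OF T] by blast+
    moreover have "(q, p) \<notin> A" using tournament_asym[OF T pq] .
    ultimately show False
      using \<open>v \<in> Ext V A\<close> vp qv
      unfolding Ext_def is_source_def is_sink_def is_transitive_vertex_def by blast
  qed
  then show "v \<in> {v \<in> V. (v, v) \<notin> A\<^sup>+}" using \<open>v \<in> V\<close> by blast
next
  fix v assume "v \<in> {v \<in> V. (v, v) \<notin> A\<^sup>+}"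
  then have v: "v \<in> V" "(v, v) \<notin> A\<^sup>+" by auto
  have "(u, w) \<in> A" if "u \<in> V" "w \<in> V" "(u, v) \<in> A" "(v, w) \<in> A" for u w
  proof (rule ccontr)
    assume "(u, w) \<notin> A"
    have "u \<noteq> w" using that(3,4) tournament_asym[OF T] by blast
    then have "(w, u) \<in> A" using tournament_total[OF T that(2,1)] \<open>(u, w) \<notin> A\<close> by blast
    then have "(v, v) \<in> A\<^sup>+" using that(3,4) by (meson trancl.trancl_into_trancl r_into_trancl)
    then show False using v(2) by blast
  qed
  then show "v \<in> Ext V A"
    unfolding Ext_def is_transitive_vertex_def using v(1) by blast
qed

lemma scc_eq_singleton_iff:
  assumes "\<And>v. (v, v) \<notin> A"
  shows "scc A v = {v} \<longleftrightarrow> (v, v) \<notin> A\<^sup>+"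
proof
  assume single: "scc A v = {v}"
  show "(v, v) \<notin> A\<^sup>+"
  proof
    assume "(v, v) \<in> A\<^sup>+"
    then obtain x where "(v, x) \<in> A" "(x, v) \<in> A\<^sup>*" using tranclD by metis
    then have "x \<in> scc A v" unfolding scc_def by simp
    then have "x = v" using single by blast
    then show False using assms \<open>(v, x) \<in> A\<close> by blast
  qed
next
  assume acyclic: "(v, v) \<notin> A\<^sup>+"
  have "x = v" if "x \<in> scc A v" for x
  proof (rule ccontr)
    assume "x \<noteq> v"
    then have "(v, x) \<in> A\<^sup>+" "(x, v) \<in> A\<^sup>*"
      using that unfolding scc_def by (auto simp: rtrancl_eq_or_trancl)
    then show False using acyclic trancl_rtrancl_trancl by metis
  qed
  then show "scc A v = {v}" using scc_self[of v A] by blast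
qed

lemma card_Ext_tournament:
  assumes T: "tournament V A"
  shows "card (Ext V A) = card {D \<in> scc A ` V. card D = 1}"
proof -
  have irrefl: "\<And>v. (v, v) \<notin> A" using tournament_asym[OF T] by blast
  have Ext: "Ext V A = {v \<in> V. scc A v = {v}}"
    unfolding Ext_tournament[OF T] scc_eq_singleton_iff[OF irrefl] ..
  have "card (scc A v) = 1 \<longleftrightarrow> scc A v = {v}" for v
  proof
    assume "card (scc A v) = 1"
    then obtain w where "scc A v = {w}" by (rule card_1_singletonE)
    then show "scc A v = {v}" using scc_self[of v A] by simp
  qed simp
  then have "{D \<in> scc A ` V. card D = 1} = scc A ` Ext V A"
    unfolding Ext by auto
  moreover have "inj_on (scc A) (Ext V A)"
    unfolding Ext by (intro inj_onI) auto
  ultimately show ?thesis by (simp add: card_image)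
qed

lemma hull_number_scc:
  assumes T: "tournament V A" and J: "J = Ig \<or> J = IP3" and D: "D \<in> scc A ` V"
  shows "hull_number J D (induced_arcs A D) = (if card D = 1 then 1 else 2)"
proof -
  obtain c where "c \<in> V" and D_def: "D = scc A c" using D by blast
  have "D \<subseteq> V" using scc_subset[OF tournament_arcs_subset[OF T] \<open>c \<in> V\<close>] D_def by simp
  have "c \<in> D" using scc_self[of c A] D_def by simp
  have "finite D" using T finite_subset[OF \<open>D \<subseteq> V\<close>] unfolding tournament_def by blast
  have wf: "well_formed_intfun J D (induced_arcs A D)"
    using J well_formed_Ig well_formed_IP3 by metis
  show ?thesis
  proof (cases "card D = 1")
    case True
    then obtain v where "D = {v}" by (rule card_1_singletonE)
    then show ?thesis using True hull_number_singleton wf by simp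
  next
    case False
    moreover have "card D \<noteq> 0" using \<open>finite D\<close> \<open>c \<in> D\<close> by auto
    ultimately have "card D \<ge> 2" by simp
    moreover have "strongly_connected D (induced_arcs A D)"
      using strongly_connected_scc_induced D_def by simp
    ultimately show ?thesis
      using False strong_tournament_hull_number[OF tournament_induced[OF T \<open>D \<subseteq> V\<close>] _ _ J] by simp
  qed
qed

lemma sum_one_or_two:
  assumes "finite F" "\<And>D. D \<in> F \<Longrightarrow> card D \<noteq> 0"
  shows "(\<Sum>D\<in>F. if card D = 1 then 1 else 2 :: nat) =
    card {D \<in> F. card D = 1} + 2 * card {D \<in> F. card D > 1}"
proof -
  have "(\<Sum>D\<in>F. if card D = 1 then 1 else 2 :: nat) =
      (\<Sum>D\<in>F \<inter> {D. card D = 1}. 1) + (\<Sum>D\<in>F \<inter> - {D. card D = 1}. 2)"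
    by (rule sum.If_cases[OF assms(1)])
  moreover have "F \<inter> {D. card D = 1} = {D \<in> F. card D = 1}" by blast
  moreover have "F \<inter> - {D. card D = 1} = {D \<in> F. card D > 1}"
    using assms(2) by fastforce
  ultimately show ?thesis by simp
qed

lemma hull_number_tournament:
  assumes T: "tournament V A" and J: "J = Ig \<or> J = IP3"
  shows "hull_number J V A = card (Ext V A) + 2 * card {D \<in> scc A ` V. card D > 1}"
proof -
  interpret separated_partition J V A "scc A ` V"
    using separated_partition_scc[OF T J] .
  have "finite V" using T unfolding tournament_def by blast
  have "hull_number J V A = (\<Sum>D\<in>scc A ` V. if card D = 1 then 1 else 2)"
    using hull_number_sum[OF \<open>finite V\<close>] hull_number_scc[OF T J] by simp
  also have "\<dots> = card {D \<in> scc A ` V. card D = 1} + 2 * card {D \<in> scc A ` V. card D > 1}"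
  proof (rule sum_one_or_two)
    show "card D \<noteq> 0" if "D \<in> scc A ` V" for D
      using partition_onD3[OF partition] finite_subset[OF part_subset \<open>finite V\<close>] that
      by (metis card_0_eq)
  qed (simp add: \<open>finite V\<close>)
  finally show ?thesis using card_Ext_tournament[OF T] by simp
qed

theorem proposition6:
  fixes V :: "'a set" and A :: "('a \<times> 'a) set" and I :: "'a intfun"
  assumes "tournament V A"
    and "V \<noteq> {}"
    and "I = Ig \<or> I = IP3"
  shows "interval_number I V A =
           (\<Sum>D\<in>strong_components V A. interval_number I D (induced_arcs A D))
       \<and> hull_number I V A =
           (\<Sum>D\<in>strong_components V A. hull_number I D (induced_arcs A D))
       \<and> hull_number IP3 V A = card (Ext V A) + 2 * card {D\<in>strong_components V A. card D > 1}
       \<and> hull_number Ig V A = card (Ext V A) + 2 * card {D\<in>strong_components V A. card D > 1}"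
proof -
  have "finite V" using assms(1) unfolding tournament_def by blast
  interpret separated_partition I V A "scc A ` V"
    using separated_partition_scc[OF assms(1,3)] .
  show ?thesis
    unfolding strong_components_eq_scc[OF tournament_arcs_subset[OF assms(1)]]
    using interval_number_sum[OF \<open>finite V\<close>] hull_number_sum[OF \<open>finite V\<close>]
      hull_number_tournament[OF assms(1)] by simp
qed

end
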